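(* Let $\mathsf{R}$ be a commutative ring and $f=\sum_{k=1}^t a_k\mathbf{x}^{\mathbf{e}_k}\in\mathsf{R}[x_1,\ldots,x_n]$ with max degree less than $D$ and at most $T$ nonzero terms. Set $\nu = \max(4n, 8\ln(10T))$, and choose $\nu$ vectors $\mathbf{s}\in\mathbb{Z}^n$, independently, according to a distribution such that for any single such random $\mathbf{s}$ and any particular term of $f$, the probability that the term collides with another term in $f(z^{s_1},\ldots,z^{s_n})$ is less than $1/4$. Then, with probability at least $9/10$, every term of $f$ collides with no other term for at least $2n$ of the substitutions.
   Context: Here $\mathbf{x}^{\mathbf{e}} = x_1^{e_1}\cdots x_n^{e_n}$, the $a_k$ are nonzero and the $\mathbf{e}_k$ pairwise distinct; max degree less than $D$ means every variable occurs with exponent less than $D$. The $i$th term collides in the substitution $\mathbf{s}=(s_1,\ldots,s_n)$ if there is $j\ne i$ with $\mathbf{e}_i\cdot\mathbf{s}=\mathbf{e}_j\cdot\mathbf{s}$. *)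

theory Defs
  imports "HOL-Probability.Probability"
begin

text \<open>A sparse polynomial f = sum_{k<t} a_k x^(e_k) in n variables is represented by
  its number of terms t, coefficients a :: nat => 'r, and exponent vectors
  e :: nat => nat => nat (e k i is the exponent of x_i in the k-th term, k < t, i < n).
  A substitution vector s in Z^n is a function nat => int (only entries i < n matter).\<close>

definition dotp :: "nat \<Rightarrow> (nat \<Rightarrow> nat) \<Rightarrow> (nat \<Rightarrow> int) \<Rightarrow> int" where
  "dotp n u s = (\<Sum>i<n. int (u i) * s i)"

definition collides :: "nat \<Rightarrow> nat \<Rightarrow> (nat \<Rightarrow> nat \<Rightarrow> nat) \<Rightarrow> nat \<Rightarrow> (nat \<Rightarrow> int) \<Rightarrow> bool" where
  "collides n t e k s \<longleftrightarrow> (\<exists>j<t. j \<noteq> k \<and> dotp n (e j) s = dotp n (e k) s)"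

definition sparse_poly :: "nat \<Rightarrow> nat \<Rightarrow> nat \<Rightarrow> (nat \<Rightarrow> 'r::comm_ring_1) \<Rightarrow> (nat \<Rightarrow> nat \<Rightarrow> nat) \<Rightarrow> bool" where
  "sparse_poly n D t a e \<longleftrightarrow>
     (\<forall>k<t. a k \<noteq> 0) \<and>
     (\<forall>k<t. \<forall>i<n. e k i < D) \<and>
     (\<forall>k<t. \<forall>j<t. k \<noteq> j \<longrightarrow> (\<exists>i<n. e k i \<noteq> e j i))"

end

theory Submission
  imports Defs
begin

text \<open>For a fixed term, the indicators of the events "the term does not collide under the
  j-th substitution" are independent Bernoulli trials with success probability greater
  than 3/4. By Hoeffding's inequality the number of successes falls below half of the
  \<open>\<nu> \<ge> 4n\<close> trials, hence below 2n, with probability at most \<open>exp (-\<nu>/8) \<le> 1/(10T)\<close>.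
  A union bound over the at most T terms finishes the proof. The shape of f (coefficients,
  degree bound, distinct exponents) plays no role beyond the collision hypothesis.\<close>

lemma measure_pmf_prob_Collect_not:
  "measure_pmf.prob p {x. \<not> P x} = 1 - measure_pmf.prob p {x. P x}"
  using measure_pmf.prob_compl[of "{x. P x}" p]
  by (simp add: Compl_eq_Diff_UNIV[symmetric] Collect_neg_eq)

lemma measure_pmf_prob_all_ge:
  fixes M :: "'a pmf" and P :: "'i \<Rightarrow> 'a \<Rightarrow> bool"
  assumes "finite I"
  shows "measure_pmf.prob M {x. \<forall>k\<in>I. P k x} \<ge> 1 - (\<Sum>k\<in>I. measure_pmf.prob M {x. \<not> P k x})"
proof -
  have "measure_pmf.prob M (\<Union>k\<in>I. {x. \<not> P k x}) \<le> (\<Sum>k\<in>I. measure_pmf.prob M {x. \<not> P k x})"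
    using assms by (intro measure_pmf.finite_measure_subadditive_finite) auto
  moreover have "{x. \<forall>k\<in>I. P k x} = - (\<Union>k\<in>I. {x. \<not> P k x})"
    by auto
  ultimately show ?thesis
    using measure_pmf.prob_compl[of "\<Union>k\<in>I. {x. \<not> P k x}" M]
    by (simp add: Compl_eq_Diff_UNIV)
qed

lemma map_pmf_eq_bernoulli_pmf:
  "map_pmf P p = bernoulli_pmf (measure_pmf.prob p {x. P x})"
proof (rule pmf_eqI)
  fix b :: bool
  show "pmf (map_pmf P p) b = pmf (bernoulli_pmf (measure_pmf.prob p {x. P x})) b"
    by (cases b) (auto simp: pmf_map vimage_def measure_pmf_prob_Collect_not)
qed

lemma binomial_pmf_eq_map_pmf_card_Pi_pmf:
  assumes "finite A"
  shows "binomial_pmf (card A) (measure_pmf.prob p {s. B s})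
           = map_pmf (\<lambda>ss. card {j\<in>A. B (ss j)}) (Pi_pmf A d (\<lambda>_. p))"
proof -
  let ?q = "measure_pmf.prob p {s. B s}"
  have "binomial_pmf (card A) ?q
          = map_pmf (\<lambda>f. card {j\<in>A. f j}) (Pi_pmf A (B d) (\<lambda>_. bernoulli_pmf ?q))"
    using assms by (intro binomial_pmf_altdef') auto
  also have "Pi_pmf A (B d) (\<lambda>_. bernoulli_pmf ?q) = map_pmf (\<lambda>h. B \<circ> h) (Pi_pmf A d (\<lambda>_. p))"
    unfolding map_pmf_eq_bernoulli_pmf[symmetric] using assms by (intro Pi_pmf_map) auto
  finally show ?thesis
    by (simp add: pmf.map_comp o_def)
qed

lemma Pi_pmf_card_lower_tail:
  assumes "finite A" "A \<noteq> {}" "\<epsilon> \<ge> 0"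
  shows "measure_pmf.prob (Pi_pmf A d (\<lambda>_. p))
           {ss. real (card {j\<in>A. B (ss j)}) \<le> card A * measure_pmf.prob p {s. B s} - \<epsilon>}
         \<le> exp (-2 * \<epsilon>\<^sup>2 / card A)"
proof -
  let ?q = "measure_pmf.prob p {s. B s}"
  have "binomial_distribution ?q"
    by unfold_locales simp
  moreover have "card A > 0"
    using assms by (simp add: card_gt_0_iff)
  ultimately have "measure_pmf.prob (binomial_pmf (card A) ?q) {x. real x \<le> card A * ?q - \<epsilon>}
                     \<le> exp (-2 * \<epsilon>\<^sup>2 / card A)"
    using assms(3) by (rule binomial_distribution.prob_le)
  then show ?thesis
    using assms(1) by (simp add: binomial_pmf_eq_map_pmf_card_Pi_pmf[of A p B d] vimage_def)
qed

lemma Pi_pmf_card_less_half: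
  assumes "finite A" "A \<noteq> {}" "measure_pmf.prob p {s. B s} \<ge> 3/4"
  shows "measure_pmf.prob (Pi_pmf A d (\<lambda>_. p)) {ss. real (card {j\<in>A. B (ss j)}) < card A / 2}
         \<le> exp (- real (card A) / 8)"
proof -
  let ?q = "measure_pmf.prob p {s. B s}"
  have "card A * ?q \<ge> card A * (3/4)"
    using assms(3) by (intro mult_left_mono) auto
  then have sub: "{ss. real (card {j\<in>A. B (ss j)}) < card A / 2}
              \<subseteq> {ss. real (card {j\<in>A. B (ss j)}) \<le> card A * ?q - card A / 4}"
    by (intro subsetI) (simp only: mem_Collect_eq; linarith)
  have "measure_pmf.prob (Pi_pmf A d (\<lambda>_. p)) {ss. real (card {j\<in>A. B (ss j)}) < card A / 2}
      \<le> measure_pmf.prob (Pi_pmf A d (\<lambda>_. p))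
           {ss. real (card {j\<in>A. B (ss j)}) \<le> card A * ?q - card A / 4}"
    using sub by (rule measure_pmf.finite_measure_mono) simp
  also have "\<dots> \<le> exp (-2 * (card A / 4)\<^sup>2 / card A)"
    using assms by (intro Pi_pmf_card_lower_tail) auto
  also have "-2 * (card A / 4)\<^sup>2 / card A = - real (card A) / 8"
    by (simp add: power2_eq_square)
  finally show ?thesis .
qed

lemma Pi_pmf_card_less_le:
  assumes "measure_pmf.prob p {s. B s} \<ge> 3/4" "\<delta> > 0"
    and "real \<nu> \<ge> 4 * real m" "real \<nu> \<ge> 8 * ln (1 / \<delta>)"
  shows "measure_pmf.prob (Pi_pmf {..<\<nu>} d (\<lambda>_. p)) {ss. card {j\<in>{..<\<nu>}. B (ss j)} < 2 * m} \<le> \<delta>"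
proof (cases "\<nu> = 0")
  case True
  then show ?thesis
    using assms by (simp add: ln_div)
next
  case False
  have "measure_pmf.prob (Pi_pmf {..<\<nu>} d (\<lambda>_. p)) {ss. card {j\<in>{..<\<nu>}. B (ss j)} < 2 * m}
      \<le> measure_pmf.prob (Pi_pmf {..<\<nu>} d (\<lambda>_. p)) {ss. real (card {j\<in>{..<\<nu>}. B (ss j)}) < \<nu> / 2}"
    using assms(3) by (intro measure_pmf.finite_measure_mono) auto
  also have "\<dots> \<le> exp (- real \<nu> / 8)"
    using Pi_pmf_card_less_half[of "{..<\<nu>}" p B d] assms(1) False by (simp add: lessThan_empty_iff)
  also have "\<dots> \<le> exp (- ln (1 / \<delta>))"
    using assms(4) by simp
  also have "\<dots> = \<delta>"
    using assms(2) by (simp add: ln_div)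
  finally show ?thesis .
qed

theorem lemma5p1:
  fixes n D t T :: nat
    and a :: "nat \<Rightarrow> 'r::comm_ring_1"
    and e :: "nat \<Rightarrow> nat \<Rightarrow> nat"
    and p :: "(nat \<Rightarrow> int) pmf"
    and \<nu> :: nat
  assumes "sparse_poly n D t a e"
    and "t \<le> T"
    and "\<nu> = nat \<lceil>max (4 * real n) (8 * ln (10 * real T))\<rceil>"
    and "\<forall>k<t. measure_pmf.prob p {s. collides n t e k s} < 1/4"
  shows "measure_pmf.prob (Pi_pmf {..<\<nu>} undefined (\<lambda>_. p))
           {ss. \<forall>k<t. card {j\<in>{..<\<nu>}. \<not> collides n t e k (ss j)} \<ge> 2 * n} \<ge> 9/10"
proof -
  let ?M = "Pi_pmf {..<\<nu>} undefined (\<lambda>_. p)"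
  let ?good = "\<lambda>k ss. card {j\<in>{..<\<nu>}. \<not> collides n t e k (ss j)} \<ge> 2 * n"
  have \<nu>_ge: "real \<nu> \<ge> 4 * real n" "real \<nu> \<ge> 8 * ln (10 * real T)"
    using assms(3) by linarith+
  have "measure_pmf.prob ?M {ss. \<not> ?good k ss} \<le> 1 / (10 * real T)" if "k < t" for k
  proof -
    have "measure_pmf.prob p {s. \<not> collides n t e k s} \<ge> 3/4"
      using that assms(4) by (auto simp: measure_pmf_prob_Collect_not less_imp_le)
    moreover have "1 / (10 * real T) > 0"
      using that assms(2) by simp
    moreover have "real \<nu> \<ge> 8 * ln (1 / (1 / (10 * real T)))"
      using \<nu>_ge(2) by simp
    ultimately show ?thesis
      using Pi_pmf_card_less_le \<nu>_ge(1) by (simp only: not_le)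
  qed
  then have "(\<Sum>k<t. measure_pmf.prob ?M {ss. \<not> ?good k ss}) \<le> (\<Sum>k<t. 1 / (10 * real T))"
    by (intro sum_mono) simp
  also have "\<dots> \<le> 1/10"
    using assms(2) by (cases "T = 0") (auto simp: field_simps)
  finally show ?thesis
    using measure_pmf_prob_all_ge[of "{..<t}" ?M ?good] by (simp add: Ball_def)
qed

end
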